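(* Let $A,B$ be automata, $R\subseteq\mathrm{states}(A)\times\mathrm{states}(B)$, and suppose the execution fragments $\alpha$ of $A$ and $\alpha'$ of $B$ are $R$-related via an index relation $I$. Then $\alpha'$ has a prefix $\alpha''$ (an execution fragment that is an initial segment of $\alpha'$, possibly $\alpha'$ itself) such that $\alpha$ and $\alpha''$ are $R$-related via a reduced index relation $J\subseteq I$.
   Context: An automaton $A$ consists of a set $\mathrm{states}(A)$ of states, a nonempty set $\mathrm{start}(A)\subseteq\mathrm{states}(A)$ of start states, a set $\mathrm{acts}(A)$ of actions containing a distinguished internal action $\tau$, and a set $\mathrm{steps}(A)\subseteq\mathrm{states}(A)\times\mathrm{acts}(A)\times\mathrm{states}(A)$ of steps; write $s\xrightarrow{a}_A t$ for $(s,a,t)\in\mathrm{steps}(A)$. An execution fragment of $A$ is a finite or infinite alternating sequence $s_0a_1s_1a_2s_2\cdots$ of states and actions, beginning with a state and, if finite, ending with a state, such that $s_{i-1}\xrightarrow{a_i}_A s_i$ for all $i>0$; its index set $\mathrm{Index}(\alpha)$ is the set of indices $i$ of its states $s_i$. Execution correspondence: Let $R\subseteq\mathrm{states}(A)\times\mathrm{states}(B)$ and let $\alpha=s_0a_1s_1\cdots$ and $\alpha'=u_0b_1u_1\cdots$ be execution fragments of $A$ and $B$. An index relation over $R$ between $\alpha$ and $\alpha'$ is a relation $I\subseteq\mathrm{Index}(\alpha)\times\mathrm{Index}(\alpha')$ such that (1) $(i,j)\in I$ implies $(s_i,u_j)\in R$; (2) $(i,j)\in I$, $(i',j')\in I$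 and $i<i'$ imply $j\le j'$; (3) every index of $\alpha$ is related by $I$ to some index of $\alpha'$ and every index of $\alpha'$ is related by $I$ to some index of $\alpha$; (4) if $(i,j),(i+1,j+1)\in I$ then $a_{i+1}=b_{j+1}$; if $(i,j),(i+1,j)\in I$ then $a_{i+1}=\tau$; if $(i,j),(i,j+1)\in I$ then $b_{j+1}=\tau$. The fragments $\alpha,\alpha'$ are $R$-related via $I$ if $I$ is such an index relation. An index relation $I$ between $\alpha$ and $\alpha'$ is reduced if (1) when $\alpha$ is finite, $I$ relates the final index of $\alpha$ only to the final index of $\alpha'$ (in particular $\alpha'$ is then finite); and (2) $I$ is N-free: $(i,j)\in I$ and $(i+1,j+1)\in I$ imply $(i+1,j)\notin I$ and $(i,j+1)\notin I$. *)

theory Defs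
  imports Main "HOL-Library.Extended_Nat"
begin

record ('s, 'a) automaton =
  states :: "'s set"
  start  :: "'s set"
  acts   :: "'a set"
  tau    :: 'a
  steps  :: "('s \<times> 'a \<times> 's) set"

definition is_automaton :: "('s, 'a) automaton \<Rightarrow> bool" where
  "is_automaton A \<longleftrightarrow> start A \<noteq> {} \<and> start A \<subseteq> states A \<and> tau A \<in> acts A
     \<and> steps A \<subseteq> states A \<times> acts A \<times> states A"

(* A (finite or infinite) alternating sequence s_0 a_1 s_1 a_2 s_2 ...
   represented by the state sequence fst_state, the action sequence (act i = a_i, i >= 1)
   and the number of steps len (infinity for infinite sequences).
   Values of st at i > len and of act at i = 0 or i > len are irrelevant. *)
record ('s, 'a) frag =
  st  :: "nat \<Rightarrow> 's"
  act :: "nat \<Rightarrow> 'a"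
  len :: enat

definition Index :: "('s, 'a) frag \<Rightarrow> nat set" where
  "Index \<alpha> = {i. enat i \<le> len \<alpha>}"

definition exec_frag :: "('s, 'a) automaton \<Rightarrow> ('s, 'a) frag \<Rightarrow> bool" where
  "exec_frag A \<alpha> \<longleftrightarrow> st \<alpha> 0 \<in> states A \<and>
     (\<forall>i. 0 < i \<and> enat i \<le> len \<alpha> \<longrightarrow> (st \<alpha> (i - 1), act \<alpha> i, st \<alpha> i) \<in> steps A)"

definition is_finite_frag :: "('s, 'a) frag \<Rightarrow> bool" where
  "is_finite_frag \<alpha> \<longleftrightarrow> len \<alpha> \<noteq> \<infinity>"

definition frag_prefix :: "('s, 'a) frag \<Rightarrow> ('s, 'a) frag \<Rightarrow> bool" where
  "frag_prefix \<beta> \<alpha> \<longleftrightarrow> len \<beta> \<le> len \<alpha> \<and>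
     (\<forall>i. enat i \<le> len \<beta> \<longrightarrow> st \<beta> i = st \<alpha> i) \<and>
     (\<forall>i. 0 < i \<and> enat i \<le> len \<beta> \<longrightarrow> act \<beta> i = act \<alpha> i)"

definition index_relation ::
  "('s, 'a) automaton \<Rightarrow> ('t, 'a) automaton \<Rightarrow> ('s \<times> 't) set \<Rightarrow>
   ('s, 'a) frag \<Rightarrow> ('t, 'a) frag \<Rightarrow> (nat \<times> nat) set \<Rightarrow> bool" where
  "index_relation A B R \<alpha> \<alpha>' I \<longleftrightarrow>
     I \<subseteq> Index \<alpha> \<times> Index \<alpha>' \<and>
     (\<forall>i j. (i, j) \<in> I \<longrightarrow> (st \<alpha> i, st \<alpha>' j) \<in> R) \<and>
     (\<forall>i j i' j'. (i, j) \<in> I \<and> (i', j') \<in> I \<and> i < i' \<longrightarrow> j \<le> j') \<and>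
     (\<forall>i \<in> Index \<alpha>. \<exists>j. (i, j) \<in> I) \<and>
     (\<forall>j \<in> Index \<alpha>'. \<exists>i. (i, j) \<in> I) \<and>
     (\<forall>i j. (i, j) \<in> I \<and> (i + 1, j + 1) \<in> I \<longrightarrow> act \<alpha> (i + 1) = act \<alpha>' (j + 1)) \<and>
     (\<forall>i j. (i, j) \<in> I \<and> (i + 1, j) \<in> I \<longrightarrow> act \<alpha> (i + 1) = tau A) \<and>
     (\<forall>i j. (i, j) \<in> I \<and> (i, j + 1) \<in> I \<longrightarrow> act \<alpha>' (j + 1) = tau B)"

definition R_related_via ::
  "('s, 'a) automaton \<Rightarrow> ('t, 'a) automaton \<Rightarrow> ('s \<times> 't) set \<Rightarrow>
   ('s, 'a) frag \<Rightarrow> ('t, 'a) frag \<Rightarrow> (nat \<times> nat) set \<Rightarrow> bool" where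
  "R_related_via A B R \<alpha> \<alpha>' I \<longleftrightarrow>
     exec_frag A \<alpha> \<and> exec_frag B \<alpha>' \<and> index_relation A B R \<alpha> \<alpha>' I"

definition reduced :: "('s, 'a) frag \<Rightarrow> ('t, 'a) frag \<Rightarrow> (nat \<times> nat) set \<Rightarrow> bool" where
  "reduced \<alpha> \<alpha>' I \<longleftrightarrow>
     (\<forall>n. len \<alpha> = enat n \<longrightarrow> (\<forall>j. (n, j) \<in> I \<longrightarrow> len \<alpha>' = enat j)) \<and>
     (\<forall>i j. (i, j) \<in> I \<and> (i + 1, j + 1) \<in> I \<longrightarrow> (i + 1, j) \<notin> I \<and> (i, j + 1) \<notin> I)"

end

theory Submission
  imports Defs
begin

(* Every condition on an index relation except covering is inherited by subrelations. An N
   consists of a diagonal pair (i, j), (i + 1, j + 1) together with one of the corners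
   (i, j + 1), (i + 1, j). Deleting every corner of the first kind keeps both index sets covered:
   by monotonicity the least partner of i is never deleted, and a deleted (i, j + 1) is replaced
   by (i + 1, j + 1). The same cut applied to the transposed relation deletes the corners of the
   second kind, leaving an N-free index relation. If alpha is finite with final index n,
   truncating alpha' at the least partner of n first relates n only to the new final index. *)

definition N_free :: "(nat \<times> nat) set \<Rightarrow> bool" where
  "N_free I \<longleftrightarrow>
     (\<forall>i j. (i, j) \<in> I \<and> (i + 1, j + 1) \<in> I \<longrightarrow> (i + 1, j) \<notin> I \<and> (i, j + 1) \<notin> I)"

definition final_indices_matched :: "('s, 'a) frag \<Rightarrow> ('t, 'a) frag \<Rightarrow> (nat \<times> nat) set \<Rightarrow> bool" where
  "final_indices_matched \<alpha> \<alpha>' I \<longleftrightarrow>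
     (\<forall>n. len \<alpha> = enat n \<longrightarrow> (\<forall>j. (n, j) \<in> I \<longrightarrow> len \<alpha>' = enat j))"

lemma reduced_iff: "reduced \<alpha> \<alpha>' I \<longleftrightarrow> final_indices_matched \<alpha> \<alpha>' I \<and> N_free I"
  unfolding reduced_def final_indices_matched_def N_free_def ..

lemma final_indices_matched_subset:
  "final_indices_matched \<alpha> \<alpha>' I \<Longrightarrow> J \<subseteq> I \<Longrightarrow> final_indices_matched \<alpha> \<alpha>' J"
  unfolding final_indices_matched_def by blast

lemma exec_frag_prefix:
  assumes "frag_prefix \<beta> \<alpha>" and "exec_frag A \<alpha>"
  shows "exec_frag A \<beta>"
  unfolding exec_frag_def
proof (intro conjI allI impI)
  have len: "len \<beta> \<le> len \<alpha>" and st: "\<And>i. enat i \<le> len \<beta> \<Longrightarrow> st \<beta> i = st \<alpha> i"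
    and act: "\<And>i. 0 < i \<Longrightarrow> enat i \<le> len \<beta> \<Longrightarrow> act \<beta> i = act \<alpha> i"
    using assms(1) unfolding frag_prefix_def by blast+
  show "st \<beta> 0 \<in> states A"
    using st[of 0] assms(2) unfolding exec_frag_def by (simp flip: zero_enat_def)
  fix i assume i: "0 < i \<and> enat i \<le> len \<beta>"
  then have "enat (i - 1) \<le> len \<beta>"
    by (simp add: order.trans[OF _ conjunct2[OF i]])
  moreover have "enat i \<le> len \<alpha>"
    using i len by (auto intro: order.trans)
  ultimately show "(st \<beta> (i - 1), act \<beta> i, st \<beta> i) \<in> steps A"
    using i st act assms(2) unfolding exec_frag_def by simp
qed

lemma frag_prefix_truncate: "enat m \<le> len \<alpha> \<Longrightarrow> frag_prefix (\<alpha>\<lparr>len := enat m\<rparr>) \<alpha>"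
  unfolding frag_prefix_def by simp

lemma index_relation_monoD:
  "index_relation A B R \<alpha> \<alpha>' I \<Longrightarrow> (i, j) \<in> I \<Longrightarrow> (i', j') \<in> I \<Longrightarrow> i < i' \<Longrightarrow> j \<le> j'"
  unfolding index_relation_def by blast

lemma index_relation_converse:
  "index_relation B A (R\<inverse>) \<alpha>' \<alpha> (I\<inverse>) \<longleftrightarrow> index_relation A B R \<alpha> \<alpha>' I"
  unfolding index_relation_def by (auto simp: not_less[symmetric])

lemma index_relation_subset:
  assumes "index_relation A B R \<alpha> \<alpha>' I" and "J \<subseteq> I" and "J \<subseteq> Index \<alpha> \<times> Index \<beta>"
    and "\<forall>i\<in>Index \<alpha>. \<exists>j. (i, j) \<in> J" and "\<forall>j\<in>Index \<beta>. \<exists>i. (i, j) \<in> J"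
    and "st \<beta> = st \<alpha>'" and "act \<beta> = act \<alpha>'"
  shows "index_relation A B R \<alpha> \<beta> J"
proof -
  from assms(1) have
    "\<forall>i j. (i, j) \<in> I \<longrightarrow> (st \<alpha> i, st \<alpha>' j) \<in> R"
    "\<forall>i j i' j'. (i, j) \<in> I \<and> (i', j') \<in> I \<and> i < i' \<longrightarrow> j \<le> j'"
    "\<forall>i j. (i, j) \<in> I \<and> (i + 1, j + 1) \<in> I \<longrightarrow> act \<alpha> (i + 1) = act \<alpha>' (j + 1)"
    "\<forall>i j. (i, j) \<in> I \<and> (i + 1, j) \<in> I \<longrightarrow> act \<alpha> (i + 1) = tau A"
    "\<forall>i j. (i, j) \<in> I \<and> (i, j + 1) \<in> I \<longrightarrow> act \<alpha>' (j + 1) = tau B"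
    unfolding index_relation_def by blast+
  with assms(2-5) show ?thesis
    unfolding index_relation_def assms(6,7) by (intro conjI; (assumption | meson subsetD))
qed

definition cut_corners :: "(nat \<times> nat) set \<Rightarrow> (nat \<times> nat) set" where
  "cut_corners I = I - {(i, j + 1) | i j. (i, j) \<in> I \<and> (i + 1, j + 1) \<in> I}"

lemma cut_corners_subset: "cut_corners I \<subseteq> I"
  unfolding cut_corners_def by blast

lemma corner_notin_cut_corners:
  "(i, j) \<in> I \<Longrightarrow> (i + 1, j + 1) \<in> I \<Longrightarrow> (i, j + 1) \<notin> cut_corners I"
  unfolding cut_corners_def by blast

lemma index_relation_cut_corners:
  assumes I: "index_relation A B R \<alpha> \<alpha>' I"
  shows "index_relation A B R \<alpha> \<alpha>' (cut_corners I)"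
proof (rule index_relation_subset[OF I cut_corners_subset])
  show "cut_corners I \<subseteq> Index \<alpha> \<times> Index \<alpha>'"
    using I cut_corners_subset unfolding index_relation_def by blast
  show "\<forall>i\<in>Index \<alpha>. \<exists>j. (i, j) \<in> cut_corners I"
  proof
    fix i assume "i \<in> Index \<alpha>"
    then obtain j where "(i, j) \<in> I"
      using I unfolding index_relation_def by blast
    then have least: "(i, LEAST j. (i, j) \<in> I) \<in> I"
      and "\<And>j. (i, j) \<in> I \<Longrightarrow> (LEAST j. (i, j) \<in> I) \<le> j"
      by (auto intro: LeastI Least_le)
    then have "(i, LEAST j. (i, j) \<in> I) \<in> cut_corners I"
      unfolding cut_corners_def by force
    then show "\<exists>j. (i, j) \<in> cut_corners I" ..
  qed
  show "\<forall>j\<in>Index \<alpha>'. \<exists>i. (i, j) \<in> cut_corners I"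
  proof
    fix j assume "j \<in> Index \<alpha>'"
    then obtain i where ij: "(i, j) \<in> I"
      using I unfolding index_relation_def by blast
    show "\<exists>i. (i, j) \<in> cut_corners I"
    proof (cases "(i, j) \<in> cut_corners I")
      case False
      then obtain k where j: "j = k + 1" and "(i + 1, k + 1) \<in> I"
        using ij unfolding cut_corners_def by blast
      moreover have "(i + 1, k) \<notin> I"
        using index_relation_monoD[OF I ij[unfolded j]] by fastforce
      ultimately have "(i + 1, j) \<in> cut_corners I"
        unfolding cut_corners_def by auto
      then show ?thesis ..
    qed blast
  qed
qed simp_all

definition reduce :: "(nat \<times> nat) set \<Rightarrow> (nat \<times> nat) set" where
  "reduce I = (cut_corners ((cut_corners I)\<inverse>))\<inverse>"

lemma reduce_subset: "reduce I \<subseteq> I"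
  unfolding reduce_def using cut_corners_subset by blast

lemma N_free_reduce: "N_free (reduce I)"
  unfolding N_free_def
proof (intro allI impI conjI)
  fix i j assume "(i, j) \<in> reduce I \<and> (i + 1, j + 1) \<in> reduce I"
  then have cut: "(i, j) \<in> cut_corners I" "(i + 1, j + 1) \<in> cut_corners I"
    unfolding reduce_def using cut_corners_subset by blast+
  then have "(j, i + 1) \<notin> cut_corners ((cut_corners I)\<inverse>)"
    using corner_notin_cut_corners[of j i "(cut_corners I)\<inverse>"] by simp
  then show "(i + 1, j) \<notin> reduce I"
    unfolding reduce_def by simp
  from cut have "(i, j + 1) \<notin> cut_corners I"
    using corner_notin_cut_corners cut_corners_subset by blast
  then show "(i, j + 1) \<notin> reduce I"
    unfolding reduce_def using cut_corners_subset by blast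
qed

lemma index_relation_reduce:
  "index_relation A B R \<alpha> \<alpha>' I \<Longrightarrow> index_relation A B R \<alpha> \<alpha>' (reduce I)"
  unfolding reduce_def
  by (metis index_relation_converse index_relation_cut_corners converse_converse)

lemma index_relation_truncate:
  assumes I: "index_relation A B R \<alpha> \<alpha>' I" and n: "len \<alpha> = enat n"
  defines "m \<equiv> LEAST j. (n, j) \<in> I"
  shows "enat m \<le> len \<alpha>'"
    and "index_relation A B R \<alpha> (\<alpha>'\<lparr>len := enat m\<rparr>) {(i, j) \<in> I. j \<le> m}"
    and "final_indices_matched \<alpha> (\<alpha>'\<lparr>len := enat m\<rparr>) {(i, j) \<in> I. j \<le> m}"
proof -
  have "n \<in> Index \<alpha>"
    using n unfolding Index_def by simp
  then obtain j where "(n, j) \<in> I"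
    using I unfolding index_relation_def by blast
  then have nm: "(n, m) \<in> I" and m_least: "\<And>j. (n, j) \<in> I \<Longrightarrow> m \<le> j"
    unfolding m_def by (auto intro: LeastI Least_le)
  then show m: "enat m \<le> len \<alpha>'"
    using I unfolding index_relation_def Index_def by blast
  have Index_truncate: "Index (\<alpha>'\<lparr>len := enat m\<rparr>) = {..m}"
    unfolding Index_def by auto
  show "index_relation A B R \<alpha> (\<alpha>'\<lparr>len := enat m\<rparr>) {(i, j) \<in> I. j \<le> m}"
  proof (rule index_relation_subset[OF I])
    show "{(i, j) \<in> I. j \<le> m} \<subseteq> Index \<alpha> \<times> Index (\<alpha>'\<lparr>len := enat m\<rparr>)"
      using I unfolding Index_truncate index_relation_def by blast
    show "\<forall>i\<in>Index \<alpha>. \<exists>j. (i, j) \<in> {(i, j) \<in> I. j \<le> m}"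
    proof
      fix i assume i: "i \<in> Index \<alpha>"
      then obtain j where ij: "(i, j) \<in> I"
        using I unfolding index_relation_def by blast
      have "i \<le> n"
        using i n unfolding Index_def by simp
      then consider "i = n" | "i < n"
        by linarith
      then show "\<exists>j. (i, j) \<in> {(i, j) \<in> I. j \<le> m}"
        using nm ij index_relation_monoD[OF I ij nm] by cases auto
    qed
    show "\<forall>j\<in>Index (\<alpha>'\<lparr>len := enat m\<rparr>). \<exists>i. (i, j) \<in> {(i, j) \<in> I. j \<le> m}"
    proof
      fix j assume "j \<in> Index (\<alpha>'\<lparr>len := enat m\<rparr>)"
      then have "j \<le> m"
        unfolding Index_truncate by simp
      then have "enat j \<le> len \<alpha>'"
        using order.trans[OF _ m] by simp
      then obtain i where "(i, j) \<in> I"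
        using I unfolding index_relation_def Index_def by blast
      with \<open>j \<le> m\<close> show "\<exists>i. (i, j) \<in> {(i, j) \<in> I. j \<le> m}"
        by blast
    qed
  qed auto
  show "final_indices_matched \<alpha> (\<alpha>'\<lparr>len := enat m\<rparr>) {(i, j) \<in> I. j \<le> m}"
    unfolding final_indices_matched_def using n m_least by (auto intro: antisym)
qed

lemma index_relation_prefix_final_indices_matched:
  assumes I: "index_relation A B R \<alpha> \<alpha>' I"
  obtains \<beta> J where "frag_prefix \<beta> \<alpha>'" and "J \<subseteq> I"
    and "index_relation A B R \<alpha> \<beta> J" and "final_indices_matched \<alpha> \<beta> J"
proof (cases "len \<alpha>")
  case (enat n)
  note truncate = index_relation_truncate[OF I enat]
  show ?thesis
    by (rule that[OF frag_prefix_truncate[OF truncate(1)] _ truncate(2,3)]) blast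
next
  case infinity
  have "frag_prefix \<alpha>' \<alpha>'" and "final_indices_matched \<alpha> \<alpha>' I"
    using infinity unfolding frag_prefix_def final_indices_matched_def by simp_all
  then show ?thesis
    using I that by blast
qed

theorem mainTheorem11:
  fixes A :: "('s, 'a) automaton" and B :: "('t, 'a) automaton"
    and R :: "('s \<times> 't) set"
    and \<alpha> :: "('s, 'a) frag" and \<alpha>' :: "('t, 'a) frag" and I :: "(nat \<times> nat) set"
  assumes "is_automaton A" and "is_automaton B"
    and "R \<subseteq> states A \<times> states B"
    and "R_related_via A B R \<alpha> \<alpha>' I"
  shows "\<exists>\<alpha>'' J. frag_prefix \<alpha>'' \<alpha>' \<and> J \<subseteq> I \<and>
           R_related_via A B R \<alpha> \<alpha>'' J \<and> reduced \<alpha> \<alpha>'' J"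
proof -
  from assms(4) have exec: "exec_frag A \<alpha>" "exec_frag B \<alpha>'"
    and I: "index_relation A B R \<alpha> \<alpha>' I"
    unfolding R_related_via_def by blast+
  obtain \<beta> K where \<beta>: "frag_prefix \<beta> \<alpha>'" and "K \<subseteq> I"
    and K: "index_relation A B R \<alpha> \<beta> K" and final: "final_indices_matched \<alpha> \<beta> K"
    using index_relation_prefix_final_indices_matched[OF I] .
  have "reduce K \<subseteq> I"
    using \<open>K \<subseteq> I\<close> reduce_subset by blast
  moreover have "R_related_via A B R \<alpha> \<beta> (reduce K)"
    unfolding R_related_via_def
    using exec exec_frag_prefix[OF \<beta>] index_relation_reduce[OF K] by blast
  moreover have "reduced \<alpha> \<beta> (reduce K)"
    unfolding reduced_iff
    using final_indices_matched_subset[OF final reduce_subset] N_free_reduce ..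
  ultimately show ?thesis
    using \<beta> by blast
qed

end
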